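(* Let $M$ be a complex $N\times N$ matrix ($N\ge 1$) whose eigenvalues $\lambda_1,\dots,\lambda_N$ are pairwise distinct, let $C(z)=\det(zI-M)=\prod_{k=1}^N(z-\lambda_k)$, and define the response function $$F(t)=\sum_{k=1}^{N}\frac{\exp(i\lambda_k t)}{C'(\lambda_k)},\qquad C'(\lambda_k)=\prod_{m\neq k}(\lambda_k-\lambda_m),$$ and the elementary symmetric polynomials $S_m[\lambda]=\sum_{1\le k_1<\cdots<k_m\le N}\lambda_{k_1}\cdots\lambda_{k_m}$ (with $S_0=1$). Then for all $t\in\mathbb{C}$, $$\exp(itM)=\sum_{n=0}^{N-1}M^n E_n(t),\qquad E_n(t)=\sum_{m=0}^{N-1-n}(-1)^m S_m[\lambda]\left(-i\frac{d}{dt}\right)^{N-1-n-m}F(t).$$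
   Context: $I$ denotes the $N\times N$ identity matrix and $\exp$ the matrix exponential. The symmetric polynomials $S_m[\lambda]$ can equivalently be computed from traces of powers of $M$ via $\det(I+tM)=\sum_{m=0}^N t^m S_m$. *)

theory Defs
  imports "HOL-Analysis.Analysis"
begin

definition cmat_scale :: "complex \<Rightarrow> complex^'n^'n \<Rightarrow> complex^'n^'n" where
  "cmat_scale c A = (\<chi> i j. c * A $ i $ j)"

primrec matpow :: "complex^'n^'n \<Rightarrow> nat \<Rightarrow> complex^'n^'n" where
  "matpow A 0 = mat 1"
| "matpow A (Suc k) = A ** matpow A k"

definition mat_exp :: "complex^'n^'n \<Rightarrow> complex^'n^'n" where
  "mat_exp A = (\<Sum>k. cmat_scale (1 / fact k) (matpow A k))"

definition elem_sym :: "('n::finite \<Rightarrow> complex) \<Rightarrow> nat \<Rightarrow> complex" where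
  "elem_sym lam m = (\<Sum>K\<in>{K. card K = m}. \<Prod>k\<in>K. lam k)"

definition response :: "('n::finite \<Rightarrow> complex) \<Rightarrow> complex \<Rightarrow> complex" where
  "response lam t = (\<Sum>k\<in>UNIV. exp (\<i> * lam k * t) / (\<Prod>m\<in>UNIV - {k}. (lam k - lam m)))"

definition E_coeff :: "('n::finite \<Rightarrow> complex) \<Rightarrow> nat \<Rightarrow> complex \<Rightarrow> complex" where
  "E_coeff lam n t = (\<Sum>m = 0..CARD('n) - 1 - n.
      (-1) ^ m * elem_sym lam m * (- \<i>) ^ (CARD('n) - 1 - n - m)
        * (deriv ^^ (CARD('n) - 1 - n - m)) (response lam) t)"

end

theory Submission
  imports Defs
begin

text \<open>
  On an eigenvector \<open>v\<^sub>k\<close> of \<open>M\<close> both sides act as scalars: \<open>exp(itM)\<close> as \<open>exp(i \<lambda>\<^sub>k t)\<close>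
  and \<open>\<Sum>\<^sub>n M^n E\<^sub>n(t)\<close> as \<open>\<Sum>\<^sub>n \<lambda>\<^sub>k^n E\<^sub>n(t)\<close>. Since \<open>-i d/dt\<close> multiplies the \<open>j\<close>-th term of \<open>F\<close>
  by \<open>\<lambda>\<^sub>j\<close>, \<open>E\<^sub>n(t) = \<Sum>\<^sub>j exp(i \<lambda>\<^sub>j t) q\<^sub>n(\<lambda>\<^sub>j) / C'(\<lambda>\<^sub>j)\<close>, where by Vieta
  \<open>\<Sum>\<^sub>n z^n q\<^sub>n(w) = (C(z) - C(w)) / (z - w)\<close>. At \<open>z = \<lambda>\<^sub>k\<close>, \<open>w = \<lambda>\<^sub>j\<close> this quotient is
  \<open>C'(\<lambda>\<^sub>k)\<close> if \<open>j = k\<close> and \<open>0\<close> otherwise, so the sum collapses to \<open>exp(i \<lambda>\<^sub>k t)\<close>.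
  The same quotient polynomials, taken in \<open>M\<close>, separate the eigenvectors; hence distinct
  eigenvalues give an eigenbasis, on which the two matrices agree.
\<close>

definition charpoly :: "('n::finite \<Rightarrow> complex) \<Rightarrow> complex \<Rightarrow> complex" where
  "charpoly lam z = (\<Prod>k\<in>UNIV. z - lam k)"

definition charpoly_deriv :: "('n::finite \<Rightarrow> complex) \<Rightarrow> 'n \<Rightarrow> complex" where
  "charpoly_deriv lam k = (\<Prod>m\<in>UNIV - {k}. lam k - lam m)"

definition charpoly_coeff :: "('n::finite \<Rightarrow> complex) \<Rightarrow> nat \<Rightarrow> complex" where
  "charpoly_coeff lam m = (-1) ^ m * elem_sym lam m"

lemma charpoly_eq_sum:
  "charpoly (lam::'n::finite \<Rightarrow> complex) z = (\<Sum>m=0..CARD('n). charpoly_coeff lam m * z ^ (CARD('n) - m))"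
proof -
  have "charpoly lam z = (\<Prod>k\<in>UNIV. - lam k + z)" by (simp add: charpoly_def)
  also have "\<dots> = (\<Sum>X\<in>Pow UNIV. (\<Prod>k\<in>X. - lam k) * (\<Prod>k\<in>UNIV - X. z))"
    by (rule prod_add) simp
  also have "\<dots> = (\<Sum>X\<in>Pow UNIV. (-1) ^ card X * (\<Prod>k\<in>X. lam k) * z ^ (CARD('n) - card X))"
  proof (rule sum.cong[OF refl])
    fix X :: "'n set"
    have "(\<Prod>k\<in>X. - lam k) = (\<Prod>k\<in>X. (-1) * lam k)" by simp
    also have "\<dots> = (-1) ^ card X * (\<Prod>k\<in>X. lam k)" by (simp only: prod.distrib prod_constant)
    finally show "(\<Prod>k\<in>X. - lam k) * (\<Prod>k\<in>UNIV - X. z)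
        = (-1) ^ card X * (\<Prod>k\<in>X. lam k) * z ^ (CARD('n) - card X)"
      by (simp add: card_Diff_subset)
  qed
  also have "\<dots> = (\<Sum>m=0..CARD('n). \<Sum>X\<in>{X\<in>Pow UNIV. card X = m}.
                    (-1) ^ card X * (\<Prod>k\<in>X. lam k) * z ^ (CARD('n) - card X))"
    by (rule sum.group[symmetric]) (auto simp: card_mono)
  also have "\<dots> = (\<Sum>m=0..CARD('n). charpoly_coeff lam m * z ^ (CARD('n) - m))"
    by (rule sum.cong[OF refl])
       (simp add: charpoly_coeff_def elem_sym_def sum_distrib_left sum_distrib_right mult.assoc)
  finally show ?thesis .
qed

text \<open>The quotient \<open>(C(z) - C(w)) / (z - w)\<close> expanded in powers of \<open>z\<close>; the coefficient of
  \<open>z^n\<close> is the polynomial in \<open>-i d/dt\<close> that \<open>E\<^sub>n\<close> applies to \<open>F\<close>.\<close>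
definition charpoly_quot :: "('n::finite \<Rightarrow> complex) \<Rightarrow> complex \<Rightarrow> complex \<Rightarrow> complex" where
  "charpoly_quot lam z w = (\<Sum>n=0..CARD('n) - 1. z ^ n *
      (\<Sum>m=0..CARD('n) - 1 - n. charpoly_coeff lam m * w ^ (CARD('n) - 1 - n - m)))"

lemma charpoly_quot_mult:
  "(z - w) * charpoly_quot (lam::'n::finite \<Rightarrow> complex) z w = charpoly lam z - charpoly lam w"
proof -
  define K where "K = CARD('n) - 1"
  have card_eq: "CARD('n) = Suc K" unfolding K_def by simp
  have "charpoly_quot lam z w
      = (\<Sum>n\<in>{0..K}. \<Sum>m\<in>{m\<in>{0..K}. n + m \<le> K}. z ^ n * (charpoly_coeff lam m * w ^ (K - n - m)))"
    unfolding charpoly_quot_def K_def[symmetric]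
    by (rule sum.cong[OF refl]) (auto simp: sum_distrib_left intro!: sum.cong)
  also have "\<dots> = (\<Sum>m\<in>{0..K}. \<Sum>n\<in>{n\<in>{0..K}. n + m \<le> K}. z ^ n * (charpoly_coeff lam m * w ^ (K - n - m)))"
    by (rule sum.swap_restrict) auto
  also have "\<dots> = (\<Sum>m\<in>{0..K}. charpoly_coeff lam m * (\<Sum>n<Suc K - m. w ^ (Suc K - m - Suc n) * z ^ n))"
  proof (rule sum.cong[OF refl])
    fix m assume "m \<in> {0..K}"
    then have "{n\<in>{0..K}. n + m \<le> K} = {..<Suc K - m}" by auto
    then show "(\<Sum>n\<in>{n\<in>{0..K}. n + m \<le> K}. z ^ n * (charpoly_coeff lam m * w ^ (K - n - m)))
        = charpoly_coeff lam m * (\<Sum>n<Suc K - m. w ^ (Suc K - m - Suc n) * z ^ n)"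
      by (simp add: sum_distrib_left algebra_simps)
  qed
  finally have quot_eq: "charpoly_quot lam z w = \<dots>" .
  have "(z - w) * charpoly_quot lam z w
      = (\<Sum>m\<in>{0..Suc K}. charpoly_coeff lam m * (z ^ (Suc K - m) - w ^ (Suc K - m)))"
    unfolding quot_eq sum_distrib_left power_diff_sumr2 by (simp add: algebra_simps)
  also have "\<dots> = charpoly lam z - charpoly lam w"
    unfolding charpoly_eq_sum card_eq by (simp add: sum_subtractf algebra_simps)
  finally show ?thesis .
qed

lemma charpoly_root: "charpoly (lam::'n::finite \<Rightarrow> complex) (lam k) = 0"
  unfolding charpoly_def by (rule prod_zero) auto

lemma charpoly_deriv_nonzero: "inj lam \<Longrightarrow> charpoly_deriv lam k \<noteq> 0"
  unfolding charpoly_deriv_def by (auto dest: injD)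

lemma isCont_eq_if_eq_punctured:
  fixes f g :: "'a::{perfect_space,t2_space} \<Rightarrow> 'b::t2_space"
  assumes "isCont f a" "isCont g a" "\<And>z. z \<noteq> a \<Longrightarrow> f z = g z"
  shows "f a = g a"
proof -
  have "eventually (\<lambda>z. g z = f z) (at a)"
    by (simp add: eventually_at_filter assms(3))
  with assms(2) have "(f \<longlongrightarrow> g a) (at a)"
    unfolding isCont_def using tendsto_cong by blast
  with assms(1) show ?thesis
    unfolding isCont_def by (rule tendsto_unique[OF at_neq_bot])
qed

lemma charpoly_quot_at_roots:
  fixes lam :: "'n::finite \<Rightarrow> complex"
  assumes "inj lam"
  shows "charpoly_quot lam (lam k) (lam j) = (if j = k then charpoly_deriv lam k else 0)"
proof (cases "j = k")
  case False
  then have "lam k - lam j \<noteq> 0" using assms by (auto dest: injD)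
  moreover have "(lam k - lam j) * charpoly_quot lam (lam k) (lam j) = 0"
    by (simp add: charpoly_quot_mult charpoly_root)
  ultimately show ?thesis using False by simp
next
  case True
  \<comment> \<open>off the root, \<open>C(z) = (z - \<lambda>\<^sub>k) \<Prod>\<^sub>m\<^sub>\<noteq>\<^sub>k (z - \<lambda>\<^sub>m)\<close> can be cancelled; then pass to the limit\<close>
  have "charpoly_quot lam (lam k) (lam k) = (\<Prod>m\<in>UNIV - {k}. lam k - lam m)"
  proof (rule isCont_eq_if_eq_punctured[where f = "\<lambda>z. charpoly_quot lam z (lam k)"])
    show "isCont (\<lambda>z. charpoly_quot lam z (lam k)) (lam k)"
      unfolding charpoly_quot_def by (intro continuous_intros)
    show "isCont (\<lambda>z. \<Prod>m\<in>UNIV - {k}. z - lam m) (lam k)"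
      by (intro continuous_intros)
    fix z assume z: "z \<noteq> lam k"
    have "(z - lam k) * charpoly_quot lam z (lam k) = charpoly lam z"
      by (simp add: charpoly_quot_mult charpoly_root)
    also have "\<dots> = (z - lam k) * (\<Prod>m\<in>UNIV - {k}. z - lam m)"
      unfolding charpoly_def by (simp add: prod.remove)
    finally show "charpoly_quot lam z (lam k) = (\<Prod>m\<in>UNIV - {k}. z - lam m)"
      using z by simp
  qed
  with True show ?thesis by (simp add: charpoly_deriv_def)
qed

lemma higher_deriv_response:
  "(deriv ^^ j) (response (lam::'n::finite \<Rightarrow> complex))
     = (\<lambda>t. \<Sum>k\<in>UNIV. (\<i> * lam k) ^ j * exp (\<i> * lam k * t) / charpoly_deriv lam k)"
proof (induction j)
  case 0
  show ?case by (simp add: response_def charpoly_deriv_def fun_eq_iff)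
next
  case (Suc j)
  have "((\<lambda>t. \<Sum>k\<in>UNIV. (\<i> * lam k) ^ j * exp (\<i> * lam k * t) / charpoly_deriv lam k)
          has_field_derivative
          (\<Sum>k\<in>UNIV. (\<i> * lam k) ^ Suc j * exp (\<i> * lam k * t) / charpoly_deriv lam k)) (at t)" for t
    by (intro DERIV_sum DERIV_cdivide) (auto intro!: derivative_eq_intros simp: algebra_simps)
  then show ?case
    unfolding funpow.simps comp_apply Suc.IH by (simp add: DERIV_imp_deriv fun_eq_iff)
qed

lemma E_coeff_eq_sum:
  "E_coeff (lam::'n::finite \<Rightarrow> complex) n t = (\<Sum>k\<in>UNIV. exp (\<i> * lam k * t) / charpoly_deriv lam k *
      (\<Sum>m=0..CARD('n) - 1 - n. charpoly_coeff lam m * lam k ^ (CARD('n) - 1 - n - m)))"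
proof -
  have minus_i_cancel: "(- \<i>) ^ p * (\<i> * x) ^ p = x ^ p" for p and x :: complex
    by (simp add: power_mult_distrib[symmetric])
  have "E_coeff lam n t = (\<Sum>m=0..CARD('n) - 1 - n. \<Sum>k\<in>UNIV.
          exp (\<i> * lam k * t) / charpoly_deriv lam k * (charpoly_coeff lam m * lam k ^ (CARD('n) - 1 - n - m)))"
    unfolding E_coeff_def higher_deriv_response charpoly_coeff_def
    by (intro sum.cong refl,
        simp add: sum_distrib_left mult.assoc minus_i_cancel flip: mult.assoc[of "(- \<i>) ^ _"],
        simp add: mult_ac)
  also have "\<dots> = (\<Sum>k\<in>UNIV. \<Sum>m=0..CARD('n) - 1 - n.
          exp (\<i> * lam k * t) / charpoly_deriv lam k * (charpoly_coeff lam m * lam k ^ (CARD('n) - 1 - n - m)))"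
    by (rule sum.swap)
  finally show ?thesis
    by (simp only: sum_distrib_left)
qed

lemma sum_E_coeff_mult_power:
  fixes lam :: "'n::finite \<Rightarrow> complex"
  assumes "inj lam"
  shows "(\<Sum>n=0..CARD('n) - 1. E_coeff lam n t * lam k ^ n) = exp (\<i> * lam k * t)"
proof -
  define e where "e j = exp (\<i> * lam j * t) / charpoly_deriv lam j" for j
  have "(\<Sum>n=0..CARD('n) - 1. E_coeff lam n t * lam k ^ n)
      = (\<Sum>j\<in>UNIV. e j * charpoly_quot lam (lam k) (lam j))"
    unfolding E_coeff_eq_sum charpoly_quot_def e_def sum_distrib_left sum_distrib_right
    by (subst sum.swap) (simp add: algebra_simps)
  also have "\<dots> = e k * charpoly_deriv lam k"
    by (simp add: charpoly_quot_at_roots[OF assms] if_distrib cong: if_cong)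
  also have "\<dots> = exp (\<i> * lam k * t)"
    using charpoly_deriv_nonzero[OF assms] by (simp add: e_def)
  finally show ?thesis .
qed

lemma cmat_scale_mult_vec: "cmat_scale c A *v v = c *s (A *v v)"
  by (simp add: vec_eq_iff cmat_scale_def matrix_vector_mult_def sum_distrib_left mult.assoc)

lemma matpow_eigenvector:
  assumes "M *v v = \<mu> *s v"
  shows "matpow M k *v v = \<mu> ^ k *s v"
proof (induction k)
  case (Suc k)
  have "matpow M (Suc k) *v v = M *v (matpow M k *v v)"
    by (simp add: matrix_vector_mul_assoc)
  also have "\<dots> = \<mu> ^ Suc k *s v"
    using Suc assms by (simp add: vec.scale)
  finally show ?case .
qed simp

lemma matrix_poly_eigenvector:
  assumes "M *v v = \<mu> *s v"
  shows "(\<Sum>n\<in>S. cmat_scale (c n) (matpow M n)) *v v = (\<Sum>n\<in>S. c n * \<mu> ^ n) *s v"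
proof (cases "finite S")
  case True
  then show ?thesis
    by (induction S rule: finite_induct)
       (simp_all add: matrix_vector_mult_add_rdistrib cmat_scale_mult_vec matpow_eigenvector[OF assms]
         vector_sadd_rdistrib vector_smult_assoc)
qed simp

lemma norm_matpow_nth_le:
  fixes A :: "complex^'n^'n"
  shows "norm (matpow A k $ i $ j) \<le> (\<Sum>i\<in>UNIV. \<Sum>j\<in>UNIV. norm (A $ i $ j)) ^ k"
proof (induction k arbitrary: i j)
  case 0
  then show ?case by (simp add: mat_def)
next
  case (Suc k)
  define B where "B = (\<Sum>i\<in>UNIV. \<Sum>j\<in>UNIV. norm (A $ i $ j))"
  have B_nonneg: "B \<ge> 0"
    unfolding B_def by (intro sum_nonneg) auto
  have row_le: "(\<Sum>l\<in>UNIV. norm (A $ i $ l)) \<le> B"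
    unfolding B_def by (rule member_le_sum[where f = "\<lambda>i. \<Sum>l\<in>UNIV. norm (A $ i $ l)"]) (auto intro: sum_nonneg)
  have "norm (matpow A (Suc k) $ i $ j) = norm (\<Sum>l\<in>UNIV. A $ i $ l * matpow A k $ l $ j)"
    by (simp add: matrix_matrix_mult_def)
  also have "\<dots> \<le> (\<Sum>l\<in>UNIV. norm (A $ i $ l)) * B ^ k"
    unfolding sum_distrib_right B_def
    by (rule order_trans[OF norm_sum sum_mono]) (simp add: norm_mult Suc mult_left_mono)
  also have "\<dots> \<le> B ^ Suc k"
    using row_le B_nonneg by (simp add: mult_right_mono)
  finally show ?case by (simp add: B_def)
qed

lemma sums_vec_lambda:
  fixes f :: "nat \<Rightarrow> 'a::real_normed_vector^'n"
  assumes "\<And>i. (\<lambda>k. f k $ i) sums s i"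
  shows "f sums (\<chi> i. s i)"
proof -
  have "(\<lambda>n. \<chi> i. \<Sum>k<n. f k $ i) \<longlonglongrightarrow> (\<chi> i. s i)"
    using assms unfolding sums_def by (rule tendsto_vec_lambda)
  moreover have "(\<lambda>n. \<chi> i. \<Sum>k<n. f k $ i) = (\<lambda>n. \<Sum>k<n. f k)"
    by (simp add: fun_eq_iff vec_eq_iff sum_component)
  ultimately show ?thesis unfolding sums_def by simp
qed

lemma mat_exp_sums: "(\<lambda>k. cmat_scale (1 / fact k) (matpow A k)) sums mat_exp A"
proof -
  define B where "B = (\<Sum>i\<in>UNIV. \<Sum>j\<in>UNIV. norm (A $ i $ j))"
  have "summable (\<lambda>k. 1 / fact k * matpow A k $ i $ j)" for i j
  proof (rule summable_comparison_test'[where N = 0])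
    show "summable (\<lambda>k. inverse (fact k) * B ^ k)"
      by (rule summable_exp)
    show "norm (1 / fact k * matpow A k $ i $ j) \<le> inverse (fact k) * B ^ k" for k
      using norm_matpow_nth_le[of A k i j]
      by (simp add: B_def norm_mult norm_inverse divide_inverse mult_left_mono)
  qed
  then have "(\<lambda>k. cmat_scale (1 / fact k) (matpow A k))
      sums (\<chi> i j. \<Sum>k. 1 / fact k * matpow A k $ i $ j)"
    by (intro sums_vec_lambda) (simp add: cmat_scale_def summable_sums)
  then show ?thesis
    unfolding mat_exp_def by (simp add: sums_iff)
qed

lemma mat_exp_eigenvector:
  fixes A :: "complex^'n^'n"
  assumes "A *v v = \<mu> *s v"
  shows "mat_exp A *v v = exp \<mu> *s v"
proof -
  have "bounded_linear (\<lambda>X::complex^'n^'n. X *v v)"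
    by (auto intro!: linearI simp: linear_conv_bounded_linear[symmetric]
        vec_eq_iff matrix_vector_mult_def scaleR_sum_right sum.distrib distrib_right)
  from bounded_linear.sums[OF this mat_exp_sums[of A]]
  have "(\<lambda>k. (\<mu> ^ k / fact k) *s v) sums (mat_exp A *v v)"
    by (simp add: cmat_scale_mult_vec matpow_eigenvector[OF assms] vector_smult_assoc)
  moreover have "(\<lambda>k. (\<mu> ^ k / fact k) *s v) sums (exp \<mu> *s v)"
  proof -
    have "(\<lambda>k. \<mu> ^ k / fact k) sums exp \<mu>"
      using exp_converges[of \<mu>] by (simp add: scaleR_conv_of_real divide_inverse mult_ac)
    then show ?thesis
      unfolding vector_scalar_mult_def by (intro sums_vec_lambda) (simp add: sums_mult2 del: times_divide_eq_left)
  qed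
  ultimately show ?thesis by (rule sums_unique2)
qed

lemma eigenvectors_inj:
  fixes M :: "complex^'n^'n" and lam :: "'k \<Rightarrow> complex"
  assumes "inj lam" "\<And>k. v k \<noteq> 0" "\<And>k. M *v v k = lam k *s v k"
  shows "inj v"
proof (rule injI)
  fix j k assume jk: "v j = v k"
  from assms(2)[of j] obtain i where i: "v j $ i \<noteq> 0" by (auto simp: vec_eq_iff)
  have "lam j *s v j = lam k *s v j" using assms(3)[of j] assms(3)[of k] jk by metis
  then have "lam j * v j $ i = lam k * v j $ i" by (metis vector_smult_component)
  with i have "lam j = lam k" by simp
  with assms(1) show "j = k" by (auto dest: injD)
qed

lemma eigenvectors_independent:
  fixes M :: "complex^'n^'n" and lam :: "'k::finite \<Rightarrow> complex"
  assumes "inj lam" "\<And>k. v k \<noteq> 0" and eig: "\<And>k. M *v v k = lam k *s v k"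
  shows "vec.independent (range v)"
proof (rule vec.independent_if_scalars_zero)
  \<comment> \<open>\<open>P\<^sub>j = (C(M) - C(\<lambda>\<^sub>j)) / (M - \<lambda>\<^sub>j)\<close> kills every eigenvector except \<open>v\<^sub>j\<close>\<close>
  define P where "P j = (\<Sum>n=0..CARD('k) - 1. cmat_scale
      (\<Sum>m=0..CARD('k) - 1 - n. charpoly_coeff lam m * lam j ^ (CARD('k) - 1 - n - m)) (matpow M n))" for j
  have P_eig: "P j *v v k = (if j = k then charpoly_deriv lam k *s v k else 0)" for j k
  proof -
    have "P j *v v k = charpoly_quot lam (lam k) (lam j) *s v k"
      unfolding P_def matrix_poly_eigenvector[OF eig] charpoly_quot_def by (simp add: mult.commute)
    then show ?thesis by (simp add: charpoly_quot_at_roots[OF assms(1)])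
  qed
  show "finite (range v)" by simp
  fix f x assume sum_zero: "(\<Sum>x\<in>range v. f x *s x) = 0" and "x \<in> range v"
  then obtain j where xj: "x = v j" by auto
  have "(\<Sum>k\<in>UNIV. f (v k) *s (P j *v v k)) = P j *v (\<Sum>k\<in>UNIV. f (v k) *s v k)"
    by (simp add: vec.sum vec.scale)
  also have "\<dots> = 0"
    using sum_zero by (simp add: sum.reindex[OF eigenvectors_inj[OF assms]])
  finally have "(f (v j) * charpoly_deriv lam j) *s v j = 0"
    by (simp add: P_eig vector_smult_assoc if_distrib cong: if_cong)
  then show "f x = 0"
    using assms(2)[of j] charpoly_deriv_nonzero[OF assms(1)] by (simp add: xj)
qed

lemma matrix_eq_on_eigenbasis:
  fixes A B M :: "complex^'n^'n" and lam :: "'n \<Rightarrow> complex"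
  assumes "inj lam" "\<And>k. v k \<noteq> 0" "\<And>k. M *v v k = lam k *s v k"
    and agree: "\<And>k. A *v v k = B *v v k"
  shows "A = B"
proof -
  have span: "UNIV \<subseteq> vec.span (range v)"
  proof (rule vec.card_ge_dim_independent)
    show "vec.independent (range v)"
      by (rule eigenvectors_independent[OF assms(1-3)])
    show "vec.dim (UNIV :: (complex^'n) set) \<le> card (range v)"
      using card_image[OF eigenvectors_inj[OF assms(1-3)]] by (simp add: card_cart_basis)
  qed simp
  show ?thesis
  proof (rule iffD2[OF matrix_eq], rule allI)
    fix x
    show "A *v x = B *v x"
      by (rule vec.linear_eq_on[OF matrix_vector_mul_linear_gen matrix_vector_mul_linear_gen, of x "range v"])
         (use span agree in auto)
  qed
qed

theorem mainTheorem1: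
  fixes M :: "complex^'n^'n" and lam :: "'n::finite \<Rightarrow> complex" and t :: complex
  assumes distinct: "inj lam"
    and eigen: "\<And>k. \<exists>v. v \<noteq> 0 \<and> M *v v = lam k *s v"
  shows "mat_exp (cmat_scale (\<i> * t) M)
         = (\<Sum>n = 0..CARD('n) - 1. cmat_scale (E_coeff lam n t) (matpow M n))"
proof -
  obtain v where nonzero: "\<And>k. v k \<noteq> 0" and eig: "\<And>k. M *v v k = lam k *s v k"
    using eigen by metis
  have "mat_exp (cmat_scale (\<i> * t) M) *v v k
      = (\<Sum>n = 0..CARD('n) - 1. cmat_scale (E_coeff lam n t) (matpow M n)) *v v k" for k
  proof -
    have "cmat_scale (\<i> * t) M *v v k = (\<i> * lam k * t) *s v k"
      by (simp add: cmat_scale_mult_vec eig vector_smult_assoc mult_ac)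
    then have "mat_exp (cmat_scale (\<i> * t) M) *v v k = exp (\<i> * lam k * t) *s v k"
      by (rule mat_exp_eigenvector)
    also have "\<dots> = (\<Sum>n = 0..CARD('n) - 1. cmat_scale (E_coeff lam n t) (matpow M n)) *v v k"
      unfolding matrix_poly_eigenvector[OF eig] sum_E_coeff_mult_power[OF distinct] ..
    finally show ?thesis .
  qed
  then show ?thesis
    by (rule matrix_eq_on_eigenbasis[OF distinct nonzero eig])
qed

end
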